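(* Let $(\Omega,\mathcal A)$ be a measurable space and let $K$ be a random compact set in $\mathbb C^n$. If $K$ takes countably many values, or if $\left|\bigcup_{\omega\in\Omega}K(\omega)\setminus\overline{\operatorname{int}K(\omega)}\right|\le\aleph_0$, then $K$ is uniformly separable. Moreover, if $K(\omega)$ is the closure of a bounded open subset of $\mathbb C^n$ for all $\omega\in\Omega$, then $K$ is uniformly separable.
   Context: A random compact set is a measurable map from $\Omega$ to the space of non-empty compact subsets of $\mathbb C^n$ with the Hausdorff distance and its Borel $\sigma$-algebra. A random compact set $K$ is uniformly separable if there is a countable set $E\subset\mathbb C^n$ such that $E\cap K(\omega)$ is dense in $K(\omega)$ for every $\omega\in\Omega$. *)

theory Defs
  imports "HOL-Analysis.Analysis"
begin

definition hausdorff_dist :: "'a::metric_space set \<Rightarrow> 'a set \<Rightarrow> real" where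
  "hausdorff_dist A B = max (SUP x\<in>A. infdist x B) (SUP y\<in>B. infdist y A)"

definition compact_sets :: "'a::metric_space set set" where
  "compact_sets = {K. compact K \<and> K \<noteq> {}}"

definition hausdorff_topology :: "'a::metric_space set topology" where
  "hausdorff_topology = Metric_space.mtopology compact_sets hausdorff_dist"

definition hausdorff_borel :: "'a::metric_space set measure" where
  "hausdorff_borel = sigma compact_sets {U. openin hausdorff_topology U}"

definition random_compact_set :: "'w measure \<Rightarrow> ('w \<Rightarrow> 'a::metric_space set) \<Rightarrow> bool" where
  "random_compact_set M K \<longleftrightarrow> K \<in> measurable M hausdorff_borel"

definition uniformly_separable :: "'w measure \<Rightarrow> ('w \<Rightarrow> 'a::metric_space set) \<Rightarrow> bool" where
  "uniformly_separable M K \<longleftrightarrow>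
     (\<exists>E. countable E \<and> (\<forall>\<omega>\<in>space M. K \<omega> \<subseteq> closure (E \<inter> K \<omega>)))"

end

theory Submission
  imports Defs
begin

(* Only the second countability of the ambient space matters.
   If K has countably many values, take the union of countable dense subsets of each value.
   Otherwise let D be countable and dense in the whole space: D meets the open set interior K
   densely, so D \<inter> K is dense in closure (interior K), and the countably many remaining points
   of K are simply added to D. The closure of an open set U is contained in the closure of its
   interior, so there are no remaining points in the last case. *)

lemma countable_dense_subset:
  fixes S :: "'a::second_countable_topology set"
  obtains D where "countable D" "D \<subseteq> S" "S \<subseteq> closure D"
proof -
  obtain B :: "'a set set" where B: "countable B" "\<And>T. open T \<Longrightarrow> \<exists>U\<subseteq>B. T = \<Union>U"
    by (meson univ_second_countable)
  define pick where "pick b = (SOME x. x \<in> b \<inter> S)" for b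
  have pick: "\<And>b. b \<inter> S \<noteq> {} \<Longrightarrow> pick b \<in> b \<inter> S"
    unfolding pick_def by (rule some_in_eq[THEN iffD2])
  define D where "D = pick ` {b\<in>B. b \<inter> S \<noteq> {}}"
  have "S \<subseteq> closure D"
  proof
    fix x assume "x \<in> S"
    show "x \<in> closure D"
      unfolding closure_iff_nhds_not_empty
    proof (intro allI impI)
      fix A T assume "T \<subseteq> A" "open T" "x \<in> T"
      then obtain b where "b \<in> B" "x \<in> b" "b \<subseteq> T"
        using B(2) by blast
      with \<open>x \<in> S\<close> have "pick b \<in> D \<inter> T"
        using pick[of b] unfolding D_def by blast
      with \<open>T \<subseteq> A\<close> show "D \<inter> A \<noteq> {}" by blast
    qed
  qed
  moreover have "countable D" "D \<subseteq> S"
    using B(1) pick unfolding D_def by auto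
  ultimately show thesis using that by blast
qed

lemma uniformly_separable_countable_range:
  fixes K :: "'w \<Rightarrow> 'a::{metric_space,second_countable_topology} set"
  assumes "countable (K ` space M)"
  shows "uniformly_separable M K"
proof -
  define dense where "dense S = (SOME D. countable D \<and> D \<subseteq> S \<and> S \<subseteq> closure D)"
    for S :: "'a set"
  have dense: "countable (dense S) \<and> dense S \<subseteq> S \<and> S \<subseteq> closure (dense S)" for S
    unfolding dense_def by (rule someI_ex) (meson countable_dense_subset)
  define E where "E = (\<Union>S\<in>K ` space M. dense S)"
  have "K \<omega> \<subseteq> closure (E \<inter> K \<omega>)" if "\<omega> \<in> space M" for \<omega>
  proof -
    have "dense (K \<omega>) \<subseteq> E \<inter> K \<omega>"
      using that dense unfolding E_def by blast
    then show ?thesis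
      using dense closure_mono by blast
  qed
  moreover have "countable E"
    using assms dense unfolding E_def by blast
  ultimately show ?thesis
    unfolding uniformly_separable_def by blast
qed

lemma uniformly_separable_countable_outside_closure_interior:
  fixes K :: "'w \<Rightarrow> 'a::{metric_space,second_countable_topology} set"
  assumes "countable (\<Union>\<omega>\<in>space M. K \<omega> - closure (interior (K \<omega>)))" (is "countable ?C")
  shows "uniformly_separable M K"
proof -
  obtain D :: "'a set" where "countable D" and D_dense: "UNIV \<subseteq> closure D"
    by (metis countable_dense_subset)
  have "K \<omega> \<subseteq> closure ((D \<union> ?C) \<inter> K \<omega>)" if "\<omega> \<in> space M" for \<omega>
  proof
    fix x assume "x \<in> K \<omega>"
    show "x \<in> closure ((D \<union> ?C) \<inter> K \<omega>)"
    proof (cases "x \<in> closure (interior (K \<omega>))")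
      case True
      have "closure (interior (K \<omega>)) = closure (interior (K \<omega>) \<inter> D)"
        using closure_open_Int_superset[of "interior (K \<omega>)" D] D_dense by auto
      also have "\<dots> \<subseteq> closure ((D \<union> ?C) \<inter> K \<omega>)"
        using interior_subset[of "K \<omega>"] by (intro closure_mono) blast
      finally show ?thesis
        using True by blast
    next
      case False
      with \<open>x \<in> K \<omega>\<close> \<open>\<omega> \<in> space M\<close> have "x \<in> (D \<union> ?C) \<inter> K \<omega>"
        by blast
      then show ?thesis
        by (rule closure_subset[THEN subsetD])
    qed
  qed
  moreover have "countable (D \<union> ?C)"
    using \<open>countable D\<close> assms by (rule countable_Un)
  ultimately show ?thesis
    unfolding uniformly_separable_def by blast
qed

lemma closure_open_subset_closure_interior:
  assumes "open U"
  shows "closure U \<subseteq> closure (interior (closure U))"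
  using assms closure_subset interior_maximal closure_mono by metis

theorem proposition7p2:
  fixes M :: "'w measure" and K :: "'w \<Rightarrow> (complex ^ 'n) set"
  assumes "random_compact_set M K"
  shows "(countable (K ` space M) \<longrightarrow> uniformly_separable M K)
       \<and> (countable (\<Union>\<omega>\<in>space M. K \<omega> - closure (interior (K \<omega>))) \<longrightarrow> uniformly_separable M K)
       \<and> ((\<forall>\<omega>\<in>space M. \<exists>U. open U \<and> bounded U \<and> K \<omega> = closure U) \<longrightarrow> uniformly_separable M K)"
proof (intro conjI impI)
  show "countable (K ` space M) \<Longrightarrow> uniformly_separable M K"
    by (rule uniformly_separable_countable_range)
  show "countable (\<Union>\<omega>\<in>space M. K \<omega> - closure (interior (K \<omega>))) \<Longrightarrow> uniformly_separable M K"
    by (rule uniformly_separable_countable_outside_closure_interior)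
  assume "\<forall>\<omega>\<in>space M. \<exists>U. open U \<and> bounded U \<and> K \<omega> = closure U"
  then have "(\<Union>\<omega>\<in>space M. K \<omega> - closure (interior (K \<omega>))) = {}"
    using closure_open_subset_closure_interior by fastforce
  then have "countable (\<Union>\<omega>\<in>space M. K \<omega> - closure (interior (K \<omega>)))"
    by (simp only: countable_empty)
  then show "uniformly_separable M K"
    by (rule uniformly_separable_countable_outside_closure_interior)
qed

end
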